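(* Let $N\ge 1$ and $-\infty<a_i\le b_i<\infty$ with $r_i=(b_i-a_i)/2>0$ for all $i$; set $m_i=(a_i+b_i)/2$, $\Theta=\prod_{i=1}^N[a_i,b_i]$, $T(y)=\sum_{i=1}^N y_i$. Fix a sampling design $p$ with inclusion probabilities $\pi_i=\mathbb P_p(i\in S)>0$ for all $i$, and let $\pi_{ij}=\mathbb P_p(i\in S,\ j\in S)$, $\Delta_{ij}=\pi_{ij}-\pi_i\pi_j$, and $D_\pi=\sum_{i=1}^N r_i^2\frac{1-\pi_i}{\pi_i}$. Let $\widehat T$ be the estimator $\widehat T(y_S)=\sum_{i=1}^N m_i+\sum_{i\in S}\frac{y_i-m_i}{\pi_i}$. The following are equivalent: (i) there exists an unbiased estimator $\delta$ with $\sup_{y\in\Theta}R(\delta,p;y)=D_\pi$; (ii) $\sup_{y\in\Theta}R(\widehat T,p;y)=D_\pi$; (iii) $\Delta_{ij}=0$ for every $i\ne j$.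
   Context: A sampling design is a probability distribution $p$ on the subsets $s\subseteq\{1,\dots,N\}$; $S$ denotes the random sample drawn from $p$, $\mathbb P_p$ and $\mathbb E_p$ denote probability and expectation with respect to $p$. An estimator $\delta$ is a collection of measurable functions $\delta_s:\Theta_s\to\mathbb R$, one for each subset $s$, where $\Theta_s=\prod_{i\in s}[a_i,b_i]$; for $y\in\Theta$ write $y_s=(y_i)_{i\in s}$. The estimator is unbiased if $\mathbb E_p[\delta_S(y_S)]=T(y)$ for all $y\in\Theta$. The risk is $R(\delta,p;y)=\mathbb E_p[(\delta_S(y_S)-T(y))^2]$. *)

theory Defs
  imports "HOL-Probability.Probability"
begin

definition Theta :: "nat \<Rightarrow> (nat \<Rightarrow> real) \<Rightarrow> (nat \<Rightarrow> real) \<Rightarrow> (nat \<Rightarrow> real) set" where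
  "Theta N a b = {y. \<forall>i\<in>{1..N}. a i \<le> y i \<and> y i \<le> b i}"

definition total :: "nat \<Rightarrow> (nat \<Rightarrow> real) \<Rightarrow> real" where
  "total N y = (\<Sum>i=1..N. y i)"

definition sampling_design :: "nat \<Rightarrow> nat set pmf \<Rightarrow> bool" where
  "sampling_design N p \<longleftrightarrow> set_pmf p \<subseteq> Pow {1..N}"

definition incl_prob :: "nat set pmf \<Rightarrow> nat \<Rightarrow> real" where
  "incl_prob p i = measure_pmf.prob p {s. i \<in> s}"

definition joint_incl_prob :: "nat set pmf \<Rightarrow> nat \<Rightarrow> nat \<Rightarrow> real" where
  "joint_incl_prob p i j = measure_pmf.prob p {s. i \<in> s \<and> j \<in> s}"

definition is_estimator ::
  "nat \<Rightarrow> (nat \<Rightarrow> real) \<Rightarrow> (nat \<Rightarrow> real) \<Rightarrow> (nat set \<Rightarrow> (nat \<Rightarrow> real) \<Rightarrow> real) \<Rightarrow> bool" where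
  "is_estimator N a b \<delta> \<longleftrightarrow>
     (\<forall>s. s \<subseteq> {1..N} \<longrightarrow>
        (\<forall>y y'. (\<forall>i\<in>s. y i = y' i) \<longrightarrow> \<delta> s y = \<delta> s y') \<and>
        \<delta> s \<in> borel_measurable
          (restrict_space (PiM s (\<lambda>_. borel)) (PiE s (\<lambda>i. {a i..b i}))))"

definition unbiased ::
  "nat \<Rightarrow> (nat \<Rightarrow> real) \<Rightarrow> (nat \<Rightarrow> real) \<Rightarrow> nat set pmf \<Rightarrow> (nat set \<Rightarrow> (nat \<Rightarrow> real) \<Rightarrow> real) \<Rightarrow> bool" where
  "unbiased N a b p \<delta> \<longleftrightarrow>
     (\<forall>y\<in>Theta N a b. measure_pmf.expectation p (\<lambda>S. \<delta> S y) = total N y)"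

definition risk ::
  "nat \<Rightarrow> (nat set \<Rightarrow> (nat \<Rightarrow> real) \<Rightarrow> real) \<Rightarrow> nat set pmf \<Rightarrow> (nat \<Rightarrow> real) \<Rightarrow> real" where
  "risk N \<delta> p y = measure_pmf.expectation p (\<lambda>S. (\<delta> S y - total N y)\<^sup>2)"

text \<open>Supremum of the risk over Theta, taken in the extended reals (so it is meaningful even
  if the risk were unbounded).\<close>
definition max_risk ::
  "nat \<Rightarrow> (nat \<Rightarrow> real) \<Rightarrow> (nat \<Rightarrow> real) \<Rightarrow> (nat set \<Rightarrow> (nat \<Rightarrow> real) \<Rightarrow> real) \<Rightarrow> nat set pmf \<Rightarrow> ereal" where
  "max_risk N a b \<delta> p = (SUP y\<in>Theta N a b. ereal (risk N \<delta> p y))"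

definition HT_mid ::
  "nat \<Rightarrow> (nat \<Rightarrow> real) \<Rightarrow> (nat \<Rightarrow> real) \<Rightarrow> nat set pmf \<Rightarrow> nat set \<Rightarrow> (nat \<Rightarrow> real) \<Rightarrow> real" where
  "HT_mid N a b p s y =
     (\<Sum>i=1..N. (a i + b i) / 2) + (\<Sum>i\<in>s. (y i - (a i + b i) / 2) / incl_prob p i)"

definition D_pi :: "nat \<Rightarrow> (nat \<Rightarrow> real) \<Rightarrow> (nat \<Rightarrow> real) \<Rightarrow> nat set pmf \<Rightarrow> real" where
  "D_pi N a b p = (\<Sum>i=1..N. ((b i - a i) / 2)\<^sup>2 * (1 - incl_prob p i) / incl_prob p i)"

end

theory Submission
  imports Defs
begin

(* Put the uniform prior on the vertices m + sigma r, sigma in {-1,1}^N, of Theta. At vertex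
   sigma the error of HT_mid is H_sigma = sum_k sigma_k r_k (1{k in S} / pi_k - 1), and the
   average of E[H_sigma^2] over the vertices is D_pi. An estimator delta cannot see the signs
   sigma_k of units k outside the sample, and with unbiasedness this makes the averaged cross
   moment of its error F_sigma with H_sigma equal to D_pi as well. Hence the average of
   E[(F_sigma - H_sigma)^2] is at most (average risk of delta) - D_pi, so if delta has maximal
   risk D_pi, then F_sigma = H_sigma on the support and E[H_sigma^2] = D_pi at every vertex.
   Since E[H_sigma^2] is a quadratic form in sigma with off-diagonal entries
   r_i r_j Delta_ij / (pi_i pi_j), it can only be constant on {-1,1}^N if every Delta_ij
   vanishes. Conversely, if Delta_ij = 0 for i ~= j, the risk of HT_mid at y is
   sum_k (y_k - m_k)^2 (1 - pi_k) / pi_k, which is at most D_pi, with equality at y = b. *)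

section \<open>Sign vectors\<close>

definition sign_vectors :: "'a set \<Rightarrow> ('a \<Rightarrow> real) set" where
  "sign_vectors K = K \<rightarrow>\<^sub>E {-1, 1}"

definition flip_sign :: "'a \<Rightarrow> ('a \<Rightarrow> real) \<Rightarrow> 'a \<Rightarrow> real" where
  "flip_sign k \<sigma> = \<sigma>(k := - \<sigma> k)"

lemma flip_sign_apply [simp]: "flip_sign k \<sigma> l = (if l = k then - \<sigma> k else \<sigma> l)"
  by (simp add: flip_sign_def)

lemma flip_sign_flip_sign [simp]: "flip_sign k (flip_sign k \<sigma>) = \<sigma>"
  by (auto simp: flip_sign_def)

lemma flip_sign_in_sign_vectors:
  "k \<in> K \<Longrightarrow> \<sigma> \<in> sign_vectors K \<Longrightarrow> flip_sign k \<sigma> \<in> sign_vectors K"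
  by (auto simp: sign_vectors_def flip_sign_def PiE_iff extensional_def)

lemma sign_vector_square: "\<sigma> \<in> sign_vectors K \<Longrightarrow> k \<in> K \<Longrightarrow> \<sigma> k * \<sigma> k = 1"
  by (auto simp: sign_vectors_def PiE_iff)

lemma const_one_in_sign_vectors: "restrict (\<lambda>_. 1) K \<in> sign_vectors K"
  by (simp add: sign_vectors_def)

lemma finite_sign_vectors: "finite K \<Longrightarrow> finite (sign_vectors K)"
  by (simp add: sign_vectors_def finite_PiE)

lemma sum_flip_sign:
  fixes x :: "'a \<Rightarrow> real"
  assumes "finite K" "k \<in> K"
  shows "(\<Sum>l\<in>K. flip_sign k \<sigma> l * x l) = (\<Sum>l\<in>K. \<sigma> l * x l) - 2 * \<sigma> k * x k"
proof -
  have "(\<Sum>l\<in>K - {k}. flip_sign k \<sigma> l * x l) = (\<Sum>l\<in>K - {k}. \<sigma> l * x l)"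
    by (rule sum.cong) auto
  then show ?thesis
    using assms by (simp add: sum.remove)
qed

lemma sum_sign_vectors_flip_sign:
  assumes "k \<in> K"
  shows "(\<Sum>\<sigma>\<in>sign_vectors K. f (flip_sign k \<sigma>)) = (\<Sum>\<sigma>\<in>sign_vectors K. f \<sigma>)"
  by (rule sum.reindex_bij_witness[where i="flip_sign k" and j="flip_sign k"])
     (auto simp: flip_sign_in_sign_vectors assms)

lemma sum_sign_vectors_odd:
  assumes "k \<in> K" and "\<And>\<sigma>. \<sigma> \<in> sign_vectors K \<Longrightarrow> f (flip_sign k \<sigma>) = f \<sigma>"
  shows "(\<Sum>\<sigma>\<in>sign_vectors K. \<sigma> k * f \<sigma>) = 0"
proof -
  have "(\<Sum>\<sigma>\<in>sign_vectors K. \<sigma> k * f \<sigma>) = (\<Sum>\<sigma>\<in>sign_vectors K. flip_sign k \<sigma> k * f (flip_sign k \<sigma>))"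
    by (rule sum_sign_vectors_flip_sign[OF assms(1), symmetric])
  also have "\<dots> = - (\<Sum>\<sigma>\<in>sign_vectors K. \<sigma> k * f \<sigma>)"
    by (simp add: assms(2) sum_negf[symmetric] cong: sum.cong)
  finally show ?thesis by simp
qed

lemma sum_sign_vectors_apply: "k \<in> K \<Longrightarrow> (\<Sum>\<sigma>\<in>sign_vectors K. \<sigma> k) = 0"
  using sum_sign_vectors_odd[of k K "\<lambda>_. 1"] by simp

lemma sum_sign_vectors_mult:
  assumes "finite K" "k \<in> K" "l \<in> K"
  shows "(\<Sum>\<sigma>\<in>sign_vectors K. \<sigma> k * \<sigma> l) = (if k = l then card (sign_vectors K) else 0)"
  using assms sum_sign_vectors_odd[of k K "\<lambda>\<sigma>. \<sigma> l"] by (simp add: sign_vector_square)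

lemma sum_sign_vectors_mult_linear:
  fixes x :: "'a \<Rightarrow> real"
  assumes "finite K" "k \<in> K"
  shows "(\<Sum>\<sigma>\<in>sign_vectors K. \<sigma> k * (\<Sum>l\<in>K. \<sigma> l * x l)) = card (sign_vectors K) * x k"
proof -
  have "(\<Sum>\<sigma>\<in>sign_vectors K. \<sigma> k * (\<Sum>l\<in>K. \<sigma> l * x l))
      = (\<Sum>l\<in>K. x l * (\<Sum>\<sigma>\<in>sign_vectors K. \<sigma> k * \<sigma> l))"
    by (simp add: sum_distrib_left sum_distrib_right mult_ac sum.swap[of _ "sign_vectors K"])
  also have "\<dots> = (\<Sum>l\<in>K. if l = k then x k * card (sign_vectors K) else 0)"
    using assms by (intro sum.cong) (auto simp: sum_sign_vectors_mult)
  finally show ?thesis using assms by simp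
qed

lemma sum_sign_vectors_square_linear:
  fixes x :: "'a \<Rightarrow> real"
  assumes "finite K"
  shows "(\<Sum>\<sigma>\<in>sign_vectors K. (\<Sum>l\<in>K. \<sigma> l * x l)\<^sup>2) = card (sign_vectors K) * (\<Sum>l\<in>K. (x l)\<^sup>2)"
proof -
  have "(\<Sum>\<sigma>\<in>sign_vectors K. (\<Sum>l\<in>K. \<sigma> l * x l)\<^sup>2)
      = (\<Sum>k\<in>K. x k * (\<Sum>\<sigma>\<in>sign_vectors K. \<sigma> k * (\<Sum>l\<in>K. \<sigma> l * x l)))"
    by (simp add: power2_eq_square sum_distrib_left sum_distrib_right mult_ac
        sum.swap[of _ "sign_vectors K"])
  also have "\<dots> = (\<Sum>k\<in>K. card (sign_vectors K) * (x k)\<^sup>2)"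
    using assms by (intro sum.cong) (auto simp: sum_sign_vectors_mult_linear power2_eq_square)
  finally show ?thesis by (simp add: sum_distrib_left)
qed

section \<open>Finite sampling designs\<close>

locale finite_design =
  fixes K :: "'a set" and P :: "'a set set" and w :: "'a set \<Rightarrow> real"
  assumes finite_K: "finite K" and finite_P: "finite P"
    and weight_nonneg: "\<And>S. S \<in> P \<Longrightarrow> 0 \<le> w S"
    and sum_weight: "(\<Sum>S\<in>P. w S) = 1"
    and sum_weight_incl_pos: "\<And>k. k \<in> K \<Longrightarrow> 0 < (\<Sum>S\<in>P. w S * of_bool (k \<in> S))"
begin

definition expect :: "('a set \<Rightarrow> real) \<Rightarrow> real" where
  "expect f = (\<Sum>S\<in>P. w S * f S)"

definition incl :: "'a \<Rightarrow> real" where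
  "incl k = expect (\<lambda>S. of_bool (k \<in> S))"

definition ht_resid :: "'a \<Rightarrow> 'a set \<Rightarrow> real" where
  "ht_resid k S = of_bool (k \<in> S) / incl k - 1"

(* The error of HT_mid at y = m + z on the sample S, see HT_mid_error below. *)
definition ht_error :: "('a \<Rightarrow> real) \<Rightarrow> 'a set \<Rightarrow> real" where
  "ht_error z S = (\<Sum>k\<in>K. z k * ht_resid k S)"

definition risk_bound :: "('a \<Rightarrow> real) \<Rightarrow> real" where
  "risk_bound r = (\<Sum>k\<in>K. (r k)\<^sup>2 * (1 - incl k) / incl k)"

lemma expect_add: "expect (\<lambda>S. f S + g S) = expect f + expect g"
  by (simp add: expect_def algebra_simps sum.distrib)

lemma expect_diff: "expect (\<lambda>S. f S - g S) = expect f - expect g"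
  by (simp add: expect_def algebra_simps sum_subtractf)

lemma expect_cmult: "expect (\<lambda>S. c * f S) = c * expect f"
  by (simp add: expect_def sum_distrib_left mult_ac)

lemma expect_divide: "expect (\<lambda>S. f S / c) = expect f / c"
  by (simp add: expect_def sum_divide_distrib)

lemma expect_const: "expect (\<lambda>_. c) = c"
  by (simp add: expect_def sum_distrib_right[symmetric] sum_weight)

lemma expect_sum: "expect (\<lambda>S. \<Sum>x\<in>A. f x S) = (\<Sum>x\<in>A. expect (f x))"
  by (simp add: expect_def sum_distrib_left sum.swap[of _ P])

lemma expect_cong: "(\<And>S. S \<in> P \<Longrightarrow> f S = g S) \<Longrightarrow> expect f = expect g"
  by (simp add: expect_def)

lemma expect_nonneg: "(\<And>S. S \<in> P \<Longrightarrow> 0 \<le> f S) \<Longrightarrow> 0 \<le> expect f"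
  unfolding expect_def by (intro sum_nonneg mult_nonneg_nonneg weight_nonneg)

lemma expect_mono: "(\<And>S. S \<in> P \<Longrightarrow> f S \<le> g S) \<Longrightarrow> expect f \<le> expect g"
  using expect_nonneg[of "\<lambda>S. g S - f S"] by (simp add: expect_diff)

lemma expect_mult_eq_0_if_expect_sq_eq_0:
  assumes "expect (\<lambda>S. (f S)\<^sup>2) = 0"
  shows "expect (\<lambda>S. f S * g S) = 0"
proof -
  have "w S * (f S)\<^sup>2 = 0" if "S \<in> P" for S
    using assms that finite_P weight_nonneg unfolding expect_def
    by (subst (asm) sum_nonneg_eq_0_iff) auto
  then have "w S * (f S * g S) = 0" if "S \<in> P" for S
    using that by auto
  then show ?thesis
    unfolding expect_def by (intro sum.neutral) blast
qed

lemma incl_pos: "k \<in> K \<Longrightarrow> 0 < incl k"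
  using sum_weight_incl_pos by (simp add: incl_def expect_def)

lemma incl_le_1: "incl k \<le> 1"
  using expect_mono[of "\<lambda>S. of_bool (k \<in> S)" "\<lambda>_. 1"] by (simp add: incl_def expect_const)

lemma expect_ht_resid: "k \<in> K \<Longrightarrow> expect (ht_resid k) = 0"
  using incl_pos[of k]
  by (simp add: ht_resid_def[abs_def] expect_diff expect_divide expect_const incl_def[symmetric])

lemma expect_ht_resid_mult:
  assumes "k \<in> K" and "\<And>S. S \<in> P \<Longrightarrow> k \<notin> S \<Longrightarrow> g S = 0"
  shows "expect (\<lambda>S. ht_resid k S * g S) = expect g / incl k - expect g"
proof -
  have "expect (\<lambda>S. ht_resid k S * g S) = expect (\<lambda>S. g S / incl k - g S)"
    using assms(2) by (intro expect_cong) (auto simp: ht_resid_def algebra_simps)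
  then show ?thesis by (simp add: expect_diff expect_divide)
qed

lemma expect_ht_resid_mult_ht_resid:
  assumes "k \<in> K" "l \<in> K"
  shows "expect (\<lambda>S. ht_resid k S * ht_resid l S)
    = expect (\<lambda>S. of_bool (k \<in> S \<and> l \<in> S)) / (incl k * incl l) - 1"
proof -
  have "ht_resid k S * ht_resid l S = of_bool (k \<in> S \<and> l \<in> S) / (incl k * incl l)
      - of_bool (k \<in> S) / incl k - of_bool (l \<in> S) / incl l + 1" for S
    using incl_pos[OF assms(1)] incl_pos[OF assms(2)] by (simp add: ht_resid_def field_simps)
  then show ?thesis
    using incl_pos[OF assms(1)] incl_pos[OF assms(2)]
    by (simp add: expect_add expect_diff expect_divide expect_const incl_def[symmetric])
qed

lemma expect_ht_resid_sq: "k \<in> K \<Longrightarrow> expect (\<lambda>S. (ht_resid k S)\<^sup>2) = (1 - incl k) / incl k"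
  using expect_ht_resid_mult_ht_resid[of k k] incl_pos[of k]
  by (simp add: power2_eq_square incl_def[symmetric] field_simps)

lemma expect_mult_eq_0_if_signed_sum_sq_const:
  fixes v :: "'a \<Rightarrow> 'a set \<Rightarrow> real"
  assumes ij: "i \<in> K" "j \<in> K" "i \<noteq> j"
    and const: "\<And>\<sigma>. \<sigma> \<in> sign_vectors K \<Longrightarrow> expect (\<lambda>S. (\<Sum>k\<in>K. \<sigma> k * v k S)\<^sup>2) = c"
  shows "expect (\<lambda>S. v i S * v j S) = 0"
proof -
  define H where "H \<sigma> S = (\<Sum>k\<in>K. \<sigma> k * v k S)" for \<sigma> S
  (* Flipping sigma_i changes E[H^2] by 4 E[v_i^2] - 4 sigma_i E[H v_i], so sigma_i E[H v_i] is
     constant; flipping sigma_j (j ~= i) then changes E[H v_i] by -2 E[v_i v_j]. *)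
  have H_flip: "H (flip_sign k \<sigma>) S = H \<sigma> S - 2 * \<sigma> k * v k S" if "k \<in> K" for k \<sigma> S
    unfolding H_def using finite_K that by (rule sum_flip_sign)
  have moment: "\<sigma> i * expect (\<lambda>S. H \<sigma> S * v i S) = expect (\<lambda>S. (v i S)\<^sup>2)"
    if \<sigma>: "\<sigma> \<in> sign_vectors K" for \<sigma>
  proof -
    have "(H (flip_sign i \<sigma>) S)\<^sup>2 = (H \<sigma> S)\<^sup>2 - 4 * \<sigma> i * (H \<sigma> S * v i S) + 4 * (v i S)\<^sup>2" for S
      using sign_vector_square[OF \<sigma> ij(1)]
      by (simp add: H_flip[OF ij(1)] power2_eq_square algebra_simps)
    then have "expect (\<lambda>S. (H (flip_sign i \<sigma>) S)\<^sup>2) = expect (\<lambda>S. (H \<sigma> S)\<^sup>2)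
        - 4 * \<sigma> i * expect (\<lambda>S. H \<sigma> S * v i S) + 4 * expect (\<lambda>S. (v i S)\<^sup>2)"
      by (simp only: expect_add expect_diff expect_cmult)
    moreover have "expect (\<lambda>S. (H (flip_sign i \<sigma>) S)\<^sup>2) = expect (\<lambda>S. (H \<sigma> S)\<^sup>2)"
      using const[OF flip_sign_in_sign_vectors[OF ij(1) \<sigma>]] const[OF \<sigma>] by (simp only: H_def)
    ultimately show ?thesis by simp
  qed
  define \<sigma>\<^sub>0 where "\<sigma>\<^sub>0 = restrict (\<lambda>_. 1 :: real) K"
  have \<sigma>\<^sub>0: "\<sigma>\<^sub>0 \<in> sign_vectors K" "flip_sign j \<sigma>\<^sub>0 \<in> sign_vectors K"
    unfolding \<sigma>\<^sub>0_def by (simp_all add: const_one_in_sign_vectors flip_sign_in_sign_vectors ij(2))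
  have "\<sigma>\<^sub>0 i = 1" "\<sigma>\<^sub>0 j = 1"
    using ij by (simp_all add: \<sigma>\<^sub>0_def)
  then have "expect (\<lambda>S. H (flip_sign j \<sigma>\<^sub>0) S * v i S)
      = expect (\<lambda>S. H \<sigma>\<^sub>0 S * v i S - 2 * (v i S * v j S))"
    by (intro expect_cong) (simp add: H_flip[OF ij(2)] algebra_simps)
  then show ?thesis
    using moment[OF \<sigma>\<^sub>0(1)] moment[OF \<sigma>\<^sub>0(2)] \<open>\<sigma>\<^sub>0 i = 1\<close> ij(3)
    by (simp add: expect_diff expect_cmult)
qed

lemma sum_sign_vectors_expect_ht_error_sq:
  "(\<Sum>\<sigma>\<in>sign_vectors K. expect (\<lambda>S. (ht_error (\<lambda>k. \<sigma> k * r k) S)\<^sup>2))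
    = card (sign_vectors K) * risk_bound r"
proof -
  have "(\<Sum>\<sigma>\<in>sign_vectors K. expect (\<lambda>S. (ht_error (\<lambda>k. \<sigma> k * r k) S)\<^sup>2))
      = expect (\<lambda>S. \<Sum>\<sigma>\<in>sign_vectors K. (\<Sum>k\<in>K. \<sigma> k * (r k * ht_resid k S))\<^sup>2)"
    by (simp add: expect_sum ht_error_def mult.assoc)
  also have "\<dots> = card (sign_vectors K) * (\<Sum>k\<in>K. (r k)\<^sup>2 * expect (\<lambda>S. (ht_resid k S)\<^sup>2))"
    by (simp add: sum_sign_vectors_square_linear[OF finite_K] expect_cmult expect_sum
        power_mult_distrib)
  also have "\<dots> = card (sign_vectors K) * risk_bound r"
    by (simp add: risk_bound_def expect_ht_resid_sq)
  finally show ?thesis .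
qed

lemma expect_ht_error_sq_if_uncorrelated:
  assumes "\<And>i j. i \<in> K \<Longrightarrow> j \<in> K \<Longrightarrow> i \<noteq> j \<Longrightarrow>
    expect (\<lambda>S. of_bool (i \<in> S \<and> j \<in> S)) = incl i * incl j"
  shows "expect (\<lambda>S. (ht_error z S)\<^sup>2) = (\<Sum>k\<in>K. (z k)\<^sup>2 * (1 - incl k) / incl k)"
proof -
  have covariance: "expect (\<lambda>S. ht_resid k S * ht_resid l S)
      = (if k = l then (1 - incl k) / incl k else 0)" if "k \<in> K" "l \<in> K" for k l
  proof (cases "k = l")
    case True
    then show ?thesis
      using expect_ht_resid_sq[OF that(1)] by (simp add: power2_eq_square)
  next
    case False
    then show ?thesis
      using expect_ht_resid_mult_ht_resid[OF that] assms[OF that False]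
        incl_pos[OF that(1)] incl_pos[OF that(2)]
      by simp
  qed
  have "expect (\<lambda>S. (ht_error z S)\<^sup>2)
      = (\<Sum>k\<in>K. \<Sum>l\<in>K. z k * z l * expect (\<lambda>S. ht_resid k S * ht_resid l S))"
    by (simp add: ht_error_def power2_eq_square sum_product expect_sum expect_cmult[symmetric] mult_ac)
  also have "\<dots> = (\<Sum>k\<in>K. \<Sum>l\<in>K. if l = k then (z k)\<^sup>2 * (1 - incl k) / incl k else 0)"
    by (intro sum.cong) (auto simp: covariance power2_eq_square)
  also have "\<dots> = (\<Sum>k\<in>K. (z k)\<^sup>2 * (1 - incl k) / incl k)"
    using finite_K by simp
  finally show ?thesis .
qed

end

section \<open>Unbiased estimators on the vertices of a box\<close>

locale vertex_estimator = finite_design +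
  fixes d :: "'a set \<Rightarrow> ('a \<Rightarrow> real) \<Rightarrow> real" and c :: real and r :: "'a \<Rightarrow> real"
  assumes unbiased: "\<And>\<sigma>. \<sigma> \<in> sign_vectors K \<Longrightarrow> expect (\<lambda>S. d S \<sigma>) = c + (\<Sum>k\<in>K. \<sigma> k * r k)"
    and local: "\<And>S \<sigma> k. S \<in> P \<Longrightarrow> \<sigma> \<in> sign_vectors K \<Longrightarrow> k \<in> K \<Longrightarrow> k \<notin> S \<Longrightarrow>
      d S (flip_sign k \<sigma>) = d S \<sigma>"
begin

definition vertex_error :: "('a \<Rightarrow> real) \<Rightarrow> 'a set \<Rightarrow> real" where
  "vertex_error \<sigma> S = d S \<sigma> - (c + (\<Sum>k\<in>K. \<sigma> k * r k))"

lemma sum_sign_vectors_expect_vertex_error_mult_ht_error: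
  "(\<Sum>\<sigma>\<in>sign_vectors K. expect (\<lambda>S. vertex_error \<sigma> S * ht_error (\<lambda>k. \<sigma> k * r k) S))
    = card (sign_vectors K) * risk_bound r"
proof -
  define n where "n = real (card (sign_vectors K))"
  define G where "G k S = (\<Sum>\<sigma>\<in>sign_vectors K. \<sigma> k * d S \<sigma>)" for k S
  have G_vanishes: "G k S = 0" if "S \<in> P" "k \<in> K" "k \<notin> S" for k S
    unfolding G_def using that by (intro sum_sign_vectors_odd) (auto intro: local)
  have expect_G: "expect (G k) = n * r k" if "k \<in> K" for k
  proof -
    have "expect (G k) = (\<Sum>\<sigma>\<in>sign_vectors K. \<sigma> k * (c + (\<Sum>l\<in>K. \<sigma> l * r l)))"
      unfolding G_def expect_sum expect_cmult by (intro sum.cong) (simp_all add: unbiased)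
    also have "\<dots> = n * r k"
      using that by (simp add: distrib_left sum.distrib sum_distrib_right[symmetric]
          sum_sign_vectors_apply sum_sign_vectors_mult_linear[OF finite_K] n_def)
    finally show ?thesis .
  qed
  have expect_resid_G: "expect (\<lambda>S. ht_resid k S * G k S) = n * r k / incl k - n * r k"
    if "k \<in> K" for k
    using expect_ht_resid_mult[OF that G_vanishes] expect_G[OF that] that by simp
  have signed_error: "(\<Sum>\<sigma>\<in>sign_vectors K. \<sigma> k * vertex_error \<sigma> S) = G k S - n * r k"
    if "k \<in> K" for k S
    using that by (simp add: vertex_error_def G_def right_diff_distrib distrib_left sum_subtractf
        sum.distrib sum_distrib_right[symmetric] sum_sign_vectors_apply
        sum_sign_vectors_mult_linear[OF finite_K] n_def)
  have "(\<Sum>\<sigma>\<in>sign_vectors K. expect (\<lambda>S. vertex_error \<sigma> S * ht_error (\<lambda>k. \<sigma> k * r k) S))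
      = expect (\<lambda>S. \<Sum>k\<in>K. r k * ht_resid k S * (\<Sum>\<sigma>\<in>sign_vectors K. \<sigma> k * vertex_error \<sigma> S))"
    by (simp add: expect_sum[symmetric] ht_error_def sum_distrib_left sum_distrib_right mult_ac
        sum.swap[of _ "sign_vectors K"])
  also have "\<dots> = expect (\<lambda>S. \<Sum>k\<in>K. r k * (ht_resid k S * G k S) - n * (r k)\<^sup>2 * ht_resid k S)"
    by (intro expect_cong sum.cong) (simp_all add: signed_error power2_eq_square algebra_simps)
  also have "\<dots> = (\<Sum>k\<in>K. r k * expect (\<lambda>S. ht_resid k S * G k S) - n * (r k)\<^sup>2 * expect (ht_resid k))"
    by (simp add: expect_sum expect_diff expect_cmult)
  also have "\<dots> = (\<Sum>k\<in>K. r k * (n * r k / incl k - n * r k))"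
    by (intro sum.cong) (simp_all add: expect_resid_G expect_ht_resid)
  also have "\<dots> = n * risk_bound r"
    unfolding risk_bound_def sum_distrib_left
    by (intro sum.cong) (auto simp: power2_eq_square field_simps dest: incl_pos)
  finally show ?thesis
    by (simp add: n_def)
qed

context
  assumes minimax: "\<And>\<sigma>. \<sigma> \<in> sign_vectors K \<Longrightarrow> expect (\<lambda>S. (vertex_error \<sigma> S)\<^sup>2) \<le> risk_bound r"
begin

lemma expect_vertex_error_diff_ht_error_sq_eq_0:
  assumes "\<sigma> \<in> sign_vectors K"
  shows "expect (\<lambda>S. (vertex_error \<sigma> S - ht_error (\<lambda>k. \<sigma> k * r k) S)\<^sup>2) = 0"
proof -
  define n where "n = real (card (sign_vectors K))"
  define H where "H \<sigma> S = ht_error (\<lambda>k. \<sigma> k * r k) S" for \<sigma> S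
  have sum_sq: "(\<Sum>\<sigma>\<in>sign_vectors K. expect (\<lambda>S. (vertex_error \<sigma> S)\<^sup>2)) \<le> n * risk_bound r"
    unfolding n_def by (rule sum_bounded_above) (rule minimax)
  (* Averaged over the vertices, H is the orthogonal projection of the error of d. *)
  have sum_cross: "(\<Sum>\<sigma>\<in>sign_vectors K. expect (\<lambda>S. vertex_error \<sigma> S * H \<sigma> S)) = n * risk_bound r"
    unfolding n_def H_def by (rule sum_sign_vectors_expect_vertex_error_mult_ht_error)
  have sum_H_sq: "(\<Sum>\<sigma>\<in>sign_vectors K. expect (\<lambda>S. (H \<sigma> S)\<^sup>2)) = n * risk_bound r"
    unfolding n_def H_def by (rule sum_sign_vectors_expect_ht_error_sq)
  have "(\<Sum>\<sigma>\<in>sign_vectors K. expect (\<lambda>S. (vertex_error \<sigma> S - H \<sigma> S)\<^sup>2))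
      = (\<Sum>\<sigma>\<in>sign_vectors K. expect (\<lambda>S. (vertex_error \<sigma> S)\<^sup>2))
        - 2 * (\<Sum>\<sigma>\<in>sign_vectors K. expect (\<lambda>S. vertex_error \<sigma> S * H \<sigma> S))
        + (\<Sum>\<sigma>\<in>sign_vectors K. expect (\<lambda>S. (H \<sigma> S)\<^sup>2))"
    by (simp add: power2_diff expect_add expect_diff expect_cmult sum.distrib sum_subtractf
        sum_distrib_left mult.assoc)
  also have "\<dots> \<le> 0"
    using sum_sq sum_cross sum_H_sq by linarith
  finally have "(\<Sum>\<sigma>\<in>sign_vectors K. expect (\<lambda>S. (vertex_error \<sigma> S - H \<sigma> S)\<^sup>2)) = 0"
    by (intro antisym sum_nonneg expect_nonneg) auto
  then show ?thesis
    using assms finite_sign_vectors[OF finite_K]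
    by (subst (asm) sum_nonneg_eq_0_iff) (auto intro: expect_nonneg simp: H_def)
qed

lemma expect_ht_error_sq_eq_risk_bound:
  assumes "\<sigma> \<in> sign_vectors K"
  shows "expect (\<lambda>S. (ht_error (\<lambda>k. \<sigma> k * r k) S)\<^sup>2) = risk_bound r"
proof -
  define H where "H \<sigma> S = ht_error (\<lambda>k. \<sigma> k * r k) S" for \<sigma> S
  have H_le: "expect (\<lambda>S. (H \<tau> S)\<^sup>2) \<le> risk_bound r" if "\<tau> \<in> sign_vectors K" for \<tau>
  proof -
    have diff_sq: "(vertex_error \<tau> S - H \<tau> S) * (vertex_error \<tau> S + H \<tau> S)
        = (vertex_error \<tau> S)\<^sup>2 - (H \<tau> S)\<^sup>2" for S
      by (simp add: power2_eq_square algebra_simps)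
    have "expect (\<lambda>S. (vertex_error \<tau> S - H \<tau> S) * (vertex_error \<tau> S + H \<tau> S)) = 0"
      using expect_vertex_error_diff_ht_error_sq_eq_0[OF that]
      unfolding H_def by (rule expect_mult_eq_0_if_expect_sq_eq_0)
    then have "expect (\<lambda>S. (vertex_error \<tau> S)\<^sup>2) = expect (\<lambda>S. (H \<tau> S)\<^sup>2)"
      by (simp only: diff_sq expect_diff)
    then show ?thesis
      using minimax[OF that] by simp
  qed
  have "(\<Sum>\<tau>\<in>sign_vectors K. risk_bound r - expect (\<lambda>S. (H \<tau> S)\<^sup>2)) = 0"
    using sum_sign_vectors_expect_ht_error_sq[of r] by (simp add: sum_subtractf H_def)
  then show ?thesis
    using assms H_le finite_sign_vectors[OF finite_K]
    by (subst (asm) sum_nonneg_eq_0_iff) (auto simp: H_def)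
qed

lemma joint_incl_eq_if_minimax:
  assumes r_nonzero: "\<And>k. k \<in> K \<Longrightarrow> r k \<noteq> 0"
    and ij: "i \<in> K" "j \<in> K" "i \<noteq> j"
  shows "expect (\<lambda>S. of_bool (i \<in> S \<and> j \<in> S)) = incl i * incl j"
proof -
  have "expect (\<lambda>S. r i * ht_resid i S * (r j * ht_resid j S)) = 0"
  proof (rule expect_mult_eq_0_if_signed_sum_sq_const[OF ij])
    fix \<sigma> assume "\<sigma> \<in> sign_vectors K"
    then show "expect (\<lambda>S. (\<Sum>k\<in>K. \<sigma> k * (r k * ht_resid k S))\<^sup>2) = risk_bound r"
      using expect_ht_error_sq_eq_risk_bound by (simp add: ht_error_def mult.assoc)
  qed
  then have "r i * r j * expect (\<lambda>S. ht_resid i S * ht_resid j S) = 0"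
    by (simp add: expect_cmult[symmetric] mult_ac)
  then have "expect (\<lambda>S. ht_resid i S * ht_resid j S) = 0"
    using r_nonzero ij by simp
  then show ?thesis
    using expect_ht_resid_mult_ht_resid[OF ij(1,2)] incl_pos[OF ij(1)] incl_pos[OF ij(2)]
    by (simp add: field_simps)
qed

end

end

section \<open>The Horvitz-Thompson estimator centred at the midpoint\<close>

lemma expectation_eq_sum:
  assumes "sampling_design N p"
  shows "measure_pmf.expectation p f = (\<Sum>S\<in>Pow {1..N}. pmf p S * f S)"
  using integral_measure_pmf_real[of "Pow {1..N}" p f] assms
  unfolding sampling_design_def by (auto simp: mult.commute)

lemma HT_mid_is_estimator: "is_estimator N a b (HT_mid N a b p)"
  unfolding is_estimator_def HT_mid_def by (auto intro!: measurable_restrict_space1)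

lemma expectation_of_bool_eq_prob:
  "measure_pmf.expectation p (\<lambda>x. of_bool (x \<in> A)) = measure_pmf.prob p A"
  by (simp flip: indicator_def)

locale survey_design =
  fixes N :: nat and a b :: "nat \<Rightarrow> real" and p :: "nat set pmf"
  assumes half_width_pos: "\<And>i. i \<in> {1..N} \<Longrightarrow> 0 < (b i - a i) / 2"
    and design: "sampling_design N p"
    and incl_prob_pos: "\<And>i. i \<in> {1..N} \<Longrightarrow> 0 < incl_prob p i"
begin

(* Otherwise simp rewrites {1..N} to {Suc 0..N}, and the facts inherited from finite_design
   stop matching. *)
declare One_nat_def [simp del]

sublocale finite_design "{1..N}" "Pow {1..N}" "pmf p"
proof
  show "(\<Sum>S\<in>Pow {1..N}. pmf p S) = 1"
    using design by (intro sum_pmf_eq_1) (auto simp: sampling_design_def)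
  show "0 < (\<Sum>S\<in>Pow {1..N}. pmf p S * of_bool (k \<in> S))" if "k \<in> {1..N}" for k
    using incl_prob_pos[OF that] expectation_of_bool_eq_prob[of p "{S. k \<in> S}"]
    by (simp add: expectation_eq_sum[OF design] incl_prob_def)
qed simp_all

lemma expectation_eq_expect: "measure_pmf.expectation p f = expect f"
  by (simp add: expectation_eq_sum[OF design] expect_def)

lemma incl_eq_incl_prob: "incl k = incl_prob p k"
  using expectation_of_bool_eq_prob[of p "{S. k \<in> S}"]
  by (simp add: incl_def incl_prob_def expectation_eq_expect)

lemma joint_incl_prob_eq_expect: "joint_incl_prob p i j = expect (\<lambda>S. of_bool (i \<in> S \<and> j \<in> S))"
  using expectation_of_bool_eq_prob[of p "{S. i \<in> S \<and> j \<in> S}"]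
  by (simp add: joint_incl_prob_def expectation_eq_expect)

abbreviation mid :: "nat \<Rightarrow> real" where
  "mid k \<equiv> (a k + b k) / 2"

abbreviation half_width :: "nat \<Rightarrow> real" where
  "half_width k \<equiv> (b k - a k) / 2"

lemma D_pi_eq_risk_bound: "D_pi N a b p = risk_bound half_width"
  by (simp add: D_pi_def risk_bound_def incl_eq_incl_prob)

lemma HT_mid_error:
  assumes "S \<subseteq> {1..N}"
  shows "HT_mid N a b p S y - total N y = ht_error (\<lambda>k. y k - mid k) S"
proof -
  have "(\<Sum>k\<in>S. (y k - mid k) / incl_prob p k)
      = (\<Sum>k\<in>{1..N}. if k \<in> S then (y k - mid k) / incl_prob p k else 0)"
    using assms by (simp add: sum.If_cases Int_absorb1)
  moreover have "(y k - mid k) * ht_resid k S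
      = (if k \<in> S then (y k - mid k) / incl_prob p k else 0) - y k + mid k" for k
    by (simp add: ht_resid_def incl_eq_incl_prob algebra_simps diff_divide_distrib add_divide_distrib)
  ultimately show ?thesis
    by (simp add: HT_mid_def total_def ht_error_def sum.distrib sum_subtractf)
qed

lemma risk_HT_mid: "risk N (HT_mid N a b p) p y = expect (\<lambda>S. (ht_error (\<lambda>k. y k - mid k) S)\<^sup>2)"
  unfolding risk_def expectation_eq_expect by (intro expect_cong) (simp add: HT_mid_error)

lemma HT_mid_unbiased: "unbiased N a b p (HT_mid N a b p)"
proof -
  have "expect (\<lambda>S. HT_mid N a b p S y) = total N y" for y
  proof -
    have "expect (\<lambda>S. HT_mid N a b p S y) = expect (\<lambda>S. total N y + ht_error (\<lambda>k. y k - mid k) S)"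
      by (intro expect_cong) (simp add: HT_mid_error[symmetric])
    then show ?thesis
      by (simp add: expect_add expect_const ht_error_def expect_sum expect_cmult expect_ht_resid)
  qed
  then show ?thesis
    by (simp add: unbiased_def expectation_eq_expect)
qed

lemma joint_incl_prob_eq_if_minimax:
  assumes "is_estimator N a b \<delta>" and "unbiased N a b p \<delta>"
    and "max_risk N a b \<delta> p = ereal (D_pi N a b p)"
    and ij: "i \<in> {1..N}" "j \<in> {1..N}" "i \<noteq> j"
  shows "joint_incl_prob p i j = incl_prob p i * incl_prob p j"
proof -
  define vertex where "vertex \<sigma> k = mid k + \<sigma> k * half_width k" for \<sigma> :: "nat \<Rightarrow> real" and k
  have vertex_in_Theta: "vertex \<sigma> \<in> Theta N a b" if "\<sigma> \<in> sign_vectors {1..N}" for \<sigma>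
    unfolding Theta_def
  proof (intro CollectI ballI)
    fix k assume k: "k \<in> {1..N}"
    then have "\<sigma> k = -1 \<or> \<sigma> k = 1"
      using that by (auto simp: sign_vectors_def PiE_iff)
    then show "a k \<le> vertex \<sigma> k \<and> vertex \<sigma> k \<le> b k"
      using half_width_pos[OF k] by (auto simp: vertex_def field_simps)
  qed
  define c where "c = (\<Sum>k\<in>{1..N}. mid k)"
  have total_vertex: "total N (vertex \<sigma>) = c + (\<Sum>k\<in>{1..N}. \<sigma> k * half_width k)" for \<sigma>
    by (simp add: total_def vertex_def c_def sum.distrib)
  interpret vertex_estimator "{1..N}" "Pow {1..N}" "pmf p" "\<lambda>S \<sigma>. \<delta> S (vertex \<sigma>)" c half_width
  proof
    show "expect (\<lambda>S. \<delta> S (vertex \<sigma>)) = c + (\<Sum>k\<in>{1..N}. \<sigma> k * half_width k)"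
      if "\<sigma> \<in> sign_vectors {1..N}" for \<sigma>
      using assms(2) vertex_in_Theta[OF that]
      by (simp add: unbiased_def expectation_eq_expect total_vertex)
    show "\<delta> S (vertex (flip_sign k \<sigma>)) = \<delta> S (vertex \<sigma>)"
      if "S \<in> Pow {1..N}" "k \<notin> S" for S \<sigma> k
      using assms(1) that unfolding is_estimator_def by (simp add: vertex_def)
  qed
  have "expect (\<lambda>S. of_bool (i \<in> S \<and> j \<in> S)) = incl i * incl j"
  proof (rule joint_incl_eq_if_minimax)
    show "expect (\<lambda>S. (vertex_error \<sigma> S)\<^sup>2) \<le> risk_bound half_width"
      if "\<sigma> \<in> sign_vectors {1..N}" for \<sigma>
    proof -
      have "ereal (risk N \<delta> p (vertex \<sigma>)) \<le> max_risk N a b \<delta> p"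
        unfolding max_risk_def by (rule SUP_upper[OF vertex_in_Theta[OF that]])
      then show ?thesis
        using assms(3)
        by (simp add: risk_def expectation_eq_expect total_vertex D_pi_eq_risk_bound vertex_error_def)
    qed
    show "half_width k \<noteq> 0" if "k \<in> {1..N}" for k
      using half_width_pos[OF that] by simp
  qed (use ij in auto)
  then show ?thesis
    by (simp add: joint_incl_prob_eq_expect incl_eq_incl_prob)
qed

lemma max_risk_HT_mid_if_uncorrelated:
  assumes "\<And>i j. i \<in> {1..N} \<Longrightarrow> j \<in> {1..N} \<Longrightarrow> i \<noteq> j \<Longrightarrow>
    joint_incl_prob p i j = incl_prob p i * incl_prob p j"
  shows "max_risk N a b (HT_mid N a b p) p = ereal (D_pi N a b p)"
proof -
  have uncorrelated: "expect (\<lambda>S. of_bool (i \<in> S \<and> j \<in> S)) = incl i * incl j"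
    if "i \<in> {1..N}" "j \<in> {1..N}" "i \<noteq> j" for i j
    using assms[OF that] by (simp add: joint_incl_prob_eq_expect incl_eq_incl_prob)
  have risk_eq: "risk N (HT_mid N a b p) p y
      = (\<Sum>k\<in>{1..N}. (y k - mid k)\<^sup>2 * (1 - incl k) / incl k)" for y
    unfolding risk_HT_mid by (rule expect_ht_error_sq_if_uncorrelated[OF uncorrelated])
  have "risk N (HT_mid N a b p) p y \<le> D_pi N a b p" if "y \<in> Theta N a b" for y
    unfolding risk_eq D_pi_eq_risk_bound risk_bound_def
  proof (rule sum_mono)
    fix k assume k: "k \<in> {1..N}"
    have "a k \<le> y k" "y k \<le> b k"
      using that k by (auto simp: Theta_def)
    then have "\<bar>y k - mid k\<bar> \<le> half_width k"
      unfolding abs_le_iff by (simp add: field_simps)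
    then have "(y k - mid k)\<^sup>2 \<le> (half_width k)\<^sup>2"
      using power_mono[OF _ abs_ge_zero, of _ _ 2] by fastforce
    moreover have "0 \<le> (1 - incl k) / incl k"
      using incl_pos[OF k] incl_le_1[of k] by simp
    ultimately show "(y k - mid k)\<^sup>2 * (1 - incl k) / incl k \<le> (half_width k)\<^sup>2 * (1 - incl k) / incl k"
      using mult_right_mono by fastforce
  qed
  moreover have "b \<in> Theta N a b"
    unfolding Theta_def using half_width_pos by force
  moreover have mid_b: "b k - mid k = half_width k" for k
    by (simp add: field_simps)
  then have "risk N (HT_mid N a b p) p b = D_pi N a b p"
    unfolding risk_eq D_pi_eq_risk_bound risk_bound_def by (simp only: mid_b)
  ultimately show ?thesis
    unfolding max_risk_def by (intro antisym SUP_least SUP_upper2[of b]) auto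
qed

end

theorem theorem2:
  fixes N :: nat and a b :: "nat \<Rightarrow> real" and p :: "nat set pmf"
  assumes "N \<ge> 1"
    and "\<And>i. i \<in> {1..N} \<Longrightarrow> a i \<le> b i"
    and "\<And>i. i \<in> {1..N} \<Longrightarrow> (b i - a i) / 2 > 0"
    and "sampling_design N p"
    and "\<And>i. i \<in> {1..N} \<Longrightarrow> incl_prob p i > 0"
  shows "((\<exists>\<delta>. is_estimator N a b \<delta> \<and> unbiased N a b p \<delta> \<and>
              max_risk N a b \<delta> p = ereal (D_pi N a b p))
          \<longleftrightarrow> max_risk N a b (HT_mid N a b p) p = ereal (D_pi N a b p))
       \<and> (max_risk N a b (HT_mid N a b p) p = ereal (D_pi N a b p)
          \<longleftrightarrow> (\<forall>i\<in>{1..N}. \<forall>j\<in>{1..N}. i \<noteq> j \<longrightarrow>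
                 joint_incl_prob p i j - incl_prob p i * incl_prob p j = 0))"
proof -
  interpret survey_design N a b p
    using assms(3-5) by unfold_locales auto
  have i_iii: "joint_incl_prob p i j - incl_prob p i * incl_prob p j = 0"
    if "is_estimator N a b \<delta>" "unbiased N a b p \<delta>" "max_risk N a b \<delta> p = ereal (D_pi N a b p)"
      and "i \<in> {1..N}" "j \<in> {1..N}" "i \<noteq> j" for \<delta> i j
    using joint_incl_prob_eq_if_minimax[OF that] by simp
  have iii_ii: "max_risk N a b (HT_mid N a b p) p = ereal (D_pi N a b p)"
    if "\<forall>i\<in>{1..N}. \<forall>j\<in>{1..N}. i \<noteq> j \<longrightarrow> joint_incl_prob p i j - incl_prob p i * incl_prob p j = 0"
    using that by (intro max_risk_HT_mid_if_uncorrelated) simp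
  show ?thesis
    using i_iii[OF HT_mid_is_estimator HT_mid_unbiased] i_iii iii_ii
      HT_mid_is_estimator HT_mid_unbiased
    by blast
qed

end
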